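(* Let $1\le j<k-1$ be integers. Consider the elections $F(j,k-1)$ and $F(j,k)$, whose voter sets are identified via their recursive construction (so both have the same voter set $N$, $|N|=2^j$). For each $v\in N$, let $A_v$ and $A'_v$ denote the ballot of $v$ in $F(j,k-1)$ and in $F(j,k)$, respectively. Then $|A'_v\setminus A_v|=1$, and the unique candidate in $A'_v\setminus A_v$ is a dummy candidate (an element of $\{d_1,d_2,\dots\}$).
   Context: Let $D_\ell=\{d_1,\dots,d_\ell\}$ be dummy candidates, with $D_0=\varnothing$ and $D_\ell\subseteq D_{\ell+1}$. Elections $F(j,k)$, for $1\le j<k$, with candidate set $D_{k-1}\cup\{a,b\}$ and committee size $k$, are defined recursively. $F(1,k)$ has two voters, voter 1 with ballot $D_{k-1}\cup\{a\}$ and voter 2 with ballot $D_{k-2}\cup\{b\}$. For $j>1$, take a copy of $F(j-1,k)$ with candidates $D_{k-1}\cup\{a_1,b_1\}$ and voter set $N_1$, and a copy of $F(j-1,k-1)$ with candidates $D_{k-2}\cup\{a_2,b_2\}$ and voter set $N_2$, disjoint from $N_1$; in every ballot of $N_1$ replace $a_1$ by $b$ and $b_1$ by $a$, in every ballot of $N_2$ replace $a_2$ by $a$ and $b_2$ by $b$; $F(j,k)$ has voters $N_1\cup N_2$ with these ballots. The identification of voters of $F(j,k-1)$ and $F(j,k)$ is the natural one: for $j=1$, voter 1 with voter 1 and voter 2 with voter 2; for $j>1$, the voters of the part $N_1$ (coming from $F(j-1,k-1)$ in $F(j,k-1)$, resp. from $F(j-1,k)$ in $F(j,k)$) are identified recursively,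 and likewise the voters of the part $N_2$ (coming from $F(j-1,k-2)$, resp. $F(j-1,k-1)$). *)

theory Defs
  imports Main
begin

text \<open>Candidates: dummy candidates Dum i (i \<ge> 1 is d_i), and the two special candidates a, b.\<close>
datatype cand = Dum nat | CA | CB

definition dummies :: "nat \<Rightarrow> cand set" where
  "dummies l = Dum ` {1..l}"

definition is_dummy :: "cand \<Rightarrow> bool" where
  "is_dummy c \<longleftrightarrow> (\<exists>i\<ge>1. c = Dum i)"

fun swap_ab :: "cand \<Rightarrow> cand" where
  "swap_ab CA = CB"
| "swap_ab CB = CA"
| "swap_ab (Dum i) = Dum i"

text \<open>Voters of F(j,k) are bool lists of length j: for j = 1, [True] is voter 1 and [False]
  is voter 2; for j > 1, True # w is voter w of the copy of F(j-1,k) (part N_1) and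
  False # w is voter w of the copy of F(j-1,k-1) (part N_2). This encoding realises the
  natural identification of voters of F(j,k-1) and F(j,k).
  F_ballot k v is the ballot of voter v in F(length v, k).\<close>
fun F_ballot :: "nat \<Rightarrow> bool list \<Rightarrow> cand set" where
  "F_ballot k [] = {}"
| "F_ballot k [True] = dummies (k - 1) \<union> {CA}"
| "F_ballot k [False] = dummies (k - 2) \<union> {CB}"
| "F_ballot k (True # x # w) = swap_ab ` F_ballot k (x # w)"
| "F_ballot k (False # x # w) = F_ballot (k - 1) (x # w)"

definition F_voters :: "nat \<Rightarrow> bool list set" where
  "F_voters j = {v. length v = j}"

end

theory Submission
  imports Defs
begin

text \<open>The candidate that voter v gains from F(j,k-1) to F(j,k) is d_(k-1-f), where f is the
  number of N_2-steps (False entries) on the path of v through the recursion: the base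
  ballots gain d_(k-1) resp. d_(k-2), the renaming of a and b fixes dummies, and each
  N_2-step lowers the committee size by one.\<close>

lemma dummies_Suc_diff: "dummies (Suc n) - dummies n = {Dum (Suc n)}"
  unfolding dummies_def by (auto simp: image_iff)

lemma CA_notin_dummies: "CA \<notin> dummies n"
  and CB_notin_dummies: "CB \<notin> dummies n"
  unfolding dummies_def by auto

lemma swap_ab_swap_ab [simp]: "swap_ab (swap_ab c) = c"
  by (cases c) auto

lemma inj_swap_ab: "inj swap_ab"
  by (metis injI swap_ab_swap_ab)

lemma F_ballot_Suc_diff:
  assumes "v \<noteq> []" and "length v < k"
  shows "F_ballot (Suc k) v - F_ballot k v = {Dum (k - count_list v False)}"
  using assms
proof (induction v arbitrary: k rule: list_nonempty_induct)
  case (single x)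
  then obtain k' where k: "k = Suc (Suc k')"
    by (auto dest!: less_imp_Suc_add)
  show ?case
  proof (cases x)
    case True
    then show ?thesis
      using dummies_Suc_diff[of "Suc k'"] CA_notin_dummies by (auto simp: k)
  next
    case False
    then show ?thesis
      using dummies_Suc_diff[of k'] CB_notin_dummies by (auto simp: k)
  qed
next
  case (cons x w)
  obtain y u where w: "w = y # u"
    using \<open>w \<noteq> []\<close> by (cases w) auto
  show ?case
  proof (cases x)
    case True
    have "F_ballot (Suc k) (x # w) - F_ballot k (x # w)
        = swap_ab ` (F_ballot (Suc k) w - F_ballot k w)"
      by (simp add: True w image_set_diff[OF inj_swap_ab])
    then show ?thesis
      using cons.IH[of k] cons.prems True by simp
  next
    case False
    obtain k' where k: "k = Suc k'"
      using cons.prems by (cases k) auto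
    have "F_ballot (Suc k) (x # w) - F_ballot k (x # w) = F_ballot (Suc k') w - F_ballot k' w"
      by (simp add: False w k)
    then show ?thesis
      using cons.IH[of k'] cons.prems False k by simp
  qed
qed

theorem proposition10:
  fixes j k :: nat
  assumes "1 \<le> j" and "j < k - 1"
  shows "\<forall>v \<in> F_voters j.
           card (F_ballot k v - F_ballot (k - 1) v) = 1 \<and>
           (\<forall>c \<in> F_ballot k v - F_ballot (k - 1) v. is_dummy c)"
proof
  fix v assume "v \<in> F_voters j"
  then have v: "v \<noteq> []" "length v < k - 1"
    using assms by (auto simp: F_voters_def)
  obtain n where k: "k = Suc n"
    using v(2) by (cases k) auto
  have "count_list v False < n"
    using v(2) count_le_length[of v False] k by linarith
  moreover have "F_ballot k v - F_ballot (k - 1) v = {Dum (n - count_list v False)}"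
    using F_ballot_Suc_diff[OF v(1)] v(2) k by simp
  ultimately show "card (F_ballot k v - F_ballot (k - 1) v) = 1 \<and>
           (\<forall>c \<in> F_ballot k v - F_ballot (k - 1) v. is_dummy c)"
    by (auto simp: is_dummy_def)
qed

end
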